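(* Let $d=2$, let $a$ be feasible (a scalar function with $a\ge\alpha$ a.e., $a\in L^\infty(\Omega)$), with state $y$ and adjoint $p$. Suppose that for almost all $x_0\in\Omega$ and all $b\ge\alpha$, \[ -(b-a(x_0))\nabla y(x_0)\cdot\nabla p(x_0)+g(b)-g(a(x_0))+\frac12\frac{(b-a(x_0))^2}{b}\Big(\nabla y(x_0)\cdot\nabla p(x_0)-\|\nabla y(x_0)\|_2\|\nabla p(x_0)\|_2\Big)\ge0. \] Then for almost all $x_0\in\Omega$ and all $b\ge\alpha$, \[ -(b-a(x_0))\nabla y(x_0)\cdot\nabla p(x_0)\,\frac{a(x_0)\,d}{b+a(x_0)(d-1)}+g(b)-g(a(x_0))\ge0. \]
   Context: $\Omega\subset\mathbb R^2$ bounded domain, $\alpha>0$, $y_d,f\in L^2(\Omega)$, $g:[\alpha,\infty)\to\mathbb R\cup\{+\infty\}$ lower semicontinuous. The state $y\in H^1_0(\Omega)$ solves $\int_\Omega a\nabla y\cdot\nabla v=\int_\Omega fv$ and the adjoint $p\in H^1_0(\Omega)$ solves $\int_\Omega a\nabla v\cdot\nabla p=\int_\Omega(y-y_d)v$, for all $v\in H^1_0(\Omega)$. *)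

theory Defs
  imports "HOL-Analysis.Analysis"
begin

definition test_fun :: "(real^2) set \<Rightarrow> (real^2 \<Rightarrow> real) \<Rightarrow> (real^2 \<Rightarrow> real^2) \<Rightarrow> bool" where
  "test_fun \<Omega> \<phi> D \<longleftrightarrow>
     (\<forall>x. (\<phi> has_derivative (\<lambda>h. D x \<bullet> h)) (at x)) \<and> continuous_on UNIV D \<and>
     compact (closure {x. \<phi> x \<noteq> 0}) \<and> closure {x. \<phi> x \<noteq> 0} \<subseteq> \<Omega>"

definition sq_integrable :: "(real^2) set \<Rightarrow> (real^2 \<Rightarrow> real) \<Rightarrow> bool" where
  "sq_integrable \<Omega> u \<longleftrightarrow> u \<in> borel_measurable (lebesgue_on \<Omega>) \<and>
     integrable (lebesgue_on \<Omega>) (\<lambda>x. (u x)^2)"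

definition sq_integrable_vec :: "(real^2) set \<Rightarrow> (real^2 \<Rightarrow> real^2) \<Rightarrow> bool" where
  "sq_integrable_vec \<Omega> G \<longleftrightarrow> G \<in> borel_measurable (lebesgue_on \<Omega>) \<and>
     integrable (lebesgue_on \<Omega>) (\<lambda>x. (norm (G x))^2)"

definition has_weak_gradient :: "(real^2) set \<Rightarrow> (real^2 \<Rightarrow> real) \<Rightarrow> (real^2 \<Rightarrow> real^2) \<Rightarrow> bool" where
  "has_weak_gradient \<Omega> u G \<longleftrightarrow>
     u \<in> borel_measurable (lebesgue_on \<Omega>) \<and> G \<in> borel_measurable (lebesgue_on \<Omega>) \<and>
     (\<forall>K. compact K \<and> K \<subseteq> \<Omega> \<longrightarrow>
        integrable (lebesgue_on K) u \<and> integrable (lebesgue_on K) (\<lambda>x. norm (G x))) \<and>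
     (\<forall>\<phi> D. test_fun \<Omega> \<phi> D \<longrightarrow>
        (\<integral>x. u x *\<^sub>R D x \<partial>lebesgue_on \<Omega>) = - (\<integral>x. \<phi> x *\<^sub>R G x \<partial>lebesgue_on \<Omega>))"

definition in_H10 :: "(real^2) set \<Rightarrow> (real^2 \<Rightarrow> real) \<Rightarrow> (real^2 \<Rightarrow> real^2) \<Rightarrow> bool" where
  "in_H10 \<Omega> u G \<longleftrightarrow> sq_integrable \<Omega> u \<and> sq_integrable_vec \<Omega> G \<and> has_weak_gradient \<Omega> u G \<and>
     (\<exists>\<phi> D. (\<forall>n::nat. test_fun \<Omega> (\<phi> n) (D n)) \<and>
        (\<lambda>n. (\<integral>x. (\<phi> n x - u x)^2 \<partial>lebesgue_on \<Omega>) + (\<integral>x. (norm (D n x - G x))^2 \<partial>lebesgue_on \<Omega>))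
          \<longlonglongrightarrow> 0)"

definition lsc_on_ray :: "real \<Rightarrow> (real \<Rightarrow> ereal) \<Rightarrow> bool" where
  "lsc_on_ray \<alpha> g \<longleftrightarrow> (\<forall>x\<ge>\<alpha>. g x \<le> Liminf (at x within {\<alpha>..}) g)"

end

theory Submission
  imports Defs
begin

text \<open>The implication holds pointwise. With \<open>u = \<nabla>y(x\<^sub>0) \<bullet> \<nabla>p(x\<^sub>0)\<close> and
  \<open>m = \<parallel>\<nabla>y(x\<^sub>0)\<parallel> \<parallel>\<nabla>p(x\<^sub>0)\<parallel> \<ge> \<bar>u\<bar>\<close> (Cauchy-Schwarz), the real part of the hypothesis never
  exceeds the real part of the conclusion: their difference is
  \<open>(b - a)\<^sup>2 ((b - a) u + (b + a) m) / (2 b (b + a))\<close>, which is nonnegative because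
  \<open>\<bar>(b - a) u\<bar> \<le> (b + a) m\<close>.\<close>

lemma quadratic_term_le_harmonic_factor:
  fixes a b u m :: real
  assumes "a > 0" "b > 0" "\<bar>u\<bar> \<le> m"
  shows "- (b - a) * u + 1/2 * (b - a)^2 / b * (u - m) \<le> - (b - a) * u * (2 * a / (b + a))"
proof -
  have "\<bar>(b - a) * u\<bar> \<le> (b + a) * m"
    using assms by (simp add: abs_mult mult_mono)
  then have "(b - a)^2 * ((b - a) * u + (b + a) * m) / (2 * b * (b + a)) \<ge> 0"
    using assms by simp
  moreover have "- (b - a) * u * (2 * a / (b + a)) - (- (b - a) * u + 1/2 * (b - a)^2 / b * (u - m))
      = (b - a)^2 * ((b - a) * u + (b + a) * m) / (2 * b * (b + a))"
    using assms by (simp add: field_simps) (simp add: algebra_simps power2_eq_square)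
  ultimately show ?thesis by linarith
qed

lemma ereal_diff_nonneg_mono:
  fixes r s t :: real and gb ga :: ereal
  assumes "r + s \<le> t" "gb \<noteq> -\<infinity>" "ga \<noteq> -\<infinity>"
    and "ereal r + gb - ga + ereal s \<ge> 0"
  shows "ereal t + gb - ga \<ge> 0"
  using assms by (cases gb; cases ga) auto

theorem mainTheorem19:
  fixes \<Omega> :: "(real^2) set" and \<alpha> :: real
    and f y\<^sub>d a y p :: "real^2 \<Rightarrow> real" and Gy Gp :: "real^2 \<Rightarrow> real^2"
    and g :: "real \<Rightarrow> ereal"
  assumes dom: "open \<Omega>" "connected \<Omega>" "bounded \<Omega>" "\<Omega> \<noteq> {}"
    and alpha: "\<alpha> > 0"
    and data: "sq_integrable \<Omega> y\<^sub>d" "sq_integrable \<Omega> f"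
    and g_real: "\<forall>b\<ge>\<alpha>. g b \<noteq> -\<infinity>"
    and g_lsc: "lsc_on_ray \<alpha> g"
    and a_meas: "a \<in> borel_measurable (lebesgue_on \<Omega>)"
    and a_bdd: "\<exists>C. AE x in lebesgue_on \<Omega>. \<bar>a x\<bar> \<le> C"
    and a_ge: "AE x in lebesgue_on \<Omega>. a x \<ge> \<alpha>"
    and state: "in_H10 \<Omega> y Gy"
      "\<forall>v Gv. in_H10 \<Omega> v Gv \<longrightarrow>
         (\<integral>x. a x * (Gy x \<bullet> Gv x) \<partial>lebesgue_on \<Omega>) = (\<integral>x. f x * v x \<partial>lebesgue_on \<Omega>)"
    and adjoint: "in_H10 \<Omega> p Gp"
      "\<forall>v Gv. in_H10 \<Omega> v Gv \<longrightarrow>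
         (\<integral>x. a x * (Gv x \<bullet> Gp x) \<partial>lebesgue_on \<Omega>) = (\<integral>x. (y x - y\<^sub>d x) * v x \<partial>lebesgue_on \<Omega>)"
    and hyp: "AE x\<^sub>0 in lebesgue_on \<Omega>. \<forall>b\<ge>\<alpha>.
       ereal (- (b - a x\<^sub>0) * (Gy x\<^sub>0 \<bullet> Gp x\<^sub>0)) + g b - g (a x\<^sub>0)
       + ereal (1/2 * (b - a x\<^sub>0)^2 / b * (Gy x\<^sub>0 \<bullet> Gp x\<^sub>0 - norm (Gy x\<^sub>0) * norm (Gp x\<^sub>0))) \<ge> 0"
  shows "AE x\<^sub>0 in lebesgue_on \<Omega>. \<forall>b\<ge>\<alpha>.
       ereal (- (b - a x\<^sub>0) * (Gy x\<^sub>0 \<bullet> Gp x\<^sub>0) * (a x\<^sub>0 * 2 / (b + a x\<^sub>0 * (2 - 1))))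
       + g b - g (a x\<^sub>0) \<ge> 0"
  using a_ge hyp
proof eventually_elim
  case (elim x)
  show ?case
  proof (intro allI impI)
    fix b assume "b \<ge> \<alpha>"
    have "- (b - a x) * (Gy x \<bullet> Gp x) + 1/2 * (b - a x)^2 / b * (Gy x \<bullet> Gp x - norm (Gy x) * norm (Gp x))
        \<le> - (b - a x) * (Gy x \<bullet> Gp x) * (a x * 2 / (b + a x * (2 - 1)))"
      using quadratic_term_le_harmonic_factor[of "a x" b "Gy x \<bullet> Gp x" "norm (Gy x) * norm (Gp x)"]
        Cauchy_Schwarz_ineq2[of "Gy x" "Gp x"] alpha elim(1) \<open>b \<ge> \<alpha>\<close> by (simp add: mult.commute)
    then show "ereal (- (b - a x) * (Gy x \<bullet> Gp x) * (a x * 2 / (b + a x * (2 - 1)))) + g b - g (a x) \<ge> 0"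
      using ereal_diff_nonneg_mono g_real elim \<open>b \<ge> \<alpha>\<close> alpha by auto
  qed
qed

end
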